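(* Let $\mathbf c$ be a cluster in $\mathrm{CEG}(\mathcal Q)$ and let $i\neq j$ be vertices of $Q_{\mathbf c}$, with local twists $t_i,t_j$ at $\mathbf c$. If there is no arrow between $i$ and $j$ in $Q_{\mathbf c}$, then $t_it_j=t_jt_i$ in $\pi_1(\mathrm{ceg}(\mathcal Q),\mathbf c)$. If there is exactly one arrow between $i$ and $j$, then $t_it_jt_i=t_jt_it_j$ in $\pi_1(\mathrm{ceg}(\mathcal Q),\mathbf c)$.
   Context: Let $(Q,W)$ be a non-degenerate quiver with potential: $Q$ has no loops or oriented 2-cycles and every quiver with potential obtained from it by iterated Derksen–Weyman–Zelevinsky mutation again has none (so underlying quivers change by ordinary quiver mutation). Let $\Gamma=\Gamma(Q,W)$ be its Ginzburg dg algebra (degree 3, assumed Jacobi-finite) and $\mathcal C(\Gamma)=\operatorname{per}\Gamma/D_{fd}(\Gamma)$ its (Amiot) cluster category. A cluster is a cluster tilting set in $\mathcal C(\Gamma)$; each object of a cluster can be mutated; $Q_{\mathbf c}$ denotes the Gabriel quiver of $\operatorname{End}(\bigoplus_{M\in\mathbf c}M)$, whose vertices are the objects of $\mathbf c$, and mutation of clusters induces quiver mutation. The canonical cluster $\mathbf c_\Gamma$ is the image of the indecomposable summands of $\Gamma$ ($Q_{\mathbf c_\Gamma}=Q$). Let $\mathcal Q$ be the mutation class of $(Q,W)$. The unoriented cluster exchange graph $\underline{\mathrm{CEG}}(\mathcal Q)$ has vertices the clusters reachable from $\mathbf c_\Gamma$ by iterated mutation and edges the mutations; the oriented cluster exchange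 graph $\mathrm{CEG}(\mathcal Q)$ replaces each edge $\mathbf c - \mu_i\mathbf c$ by the two oriented edges $\mathbf c\to\mu_i\mathbf c$ and $\mu_i\mathbf c\to\mathbf c$ (forward mutations). Paths are composed left to right. The local twist $t_i$ at $\mathbf c$ (for a vertex $i$ of $Q_{\mathbf c}$) is the loop $\mathbf c\to\mu_i\mathbf c\to\mathbf c$ composed of the two forward mutations of the edge $\mu_i$. The cluster exchange groupoid $\mathrm{ceg}(\mathcal Q)$ is the quotient of the path groupoid of $\mathrm{CEG}(\mathcal Q)$ (objects the vertices; morphisms generated by the edges and their formal inverses) by the following relations, imposed for every cluster $\mathbf c$ and every ordered pair of distinct vertices $i,j$ of $Q_{\mathbf c}$ with no arrow from $i$ to $j$. Put $\mathbf c'=\mu_j\mathbf c$ and consider the path $\mu_i\mathbf c - \mathbf c - \mathbf c' - \mu_i\mathbf c'$ in $\underline{\mathrm{CEG}}$; write $x$ for each forward mutation in the direction $\mu_i\mathbf c\to\mathbf c\to\mathbf c'\to\mu_i\mathbf c'$ and $y$ for each forward mutation in the opposite direction (so at $\mathbf c$, $t_i=yx$ and $t_j=xy$). (1) Hexagonal relation: $x^2y=yx^2$ (as morphisms $\mathbf c\to\mathbf c'$). (2) If there is also no arrow from $j$ to $i$, the clusters $\mathbf c,\mu_j\mathbf c,\mu_i\mu_j\mathbf c=\mu_j\mu_i\mathbf c,\mu_i\mathbf c$ form a 4-cycle; labelling by $x$ the forward mutations around it in the direction starting $\mathbf c\to\mu_j\mathbf c$ and by $y$ those in the other direction, impose $x^2=y^2$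 (paths from $\mathbf c$). (3) If there is exactly one arrow from $j$ to $i$, the clusters obtained from $\mathbf c$ by alternately mutating at $i$ and $j$ form a 5-cycle; with the analogous labelling impose $x^2=y^3$ (paths from $\mathbf c$). *)

theory Defs
  imports Main
begin

text \<open>Abstract rendering of the cluster exchange graph of the Amiot cluster category
  of a non-degenerate Jacobi-finite quiver with potential.  Objects of the cluster
  category have type 'o; a cluster is a set of objects.
  mut c i   : the cluster obtained from c by mutating the object i (for i in c);
  arr c a b : number of arrows from a to b in the Gabriel quiver Q_c;
  c0        : the canonical cluster.\<close>

datatype 'o letter = Fwd "'o set" 'o | Inv "'o set" 'o

inductive_set reachable :: "('o set \<Rightarrow> 'o \<Rightarrow> 'o set) \<Rightarrow> 'o set \<Rightarrow> 'o set set"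
  for mut c0 where
  base: "c0 \<in> reachable mut c0"
| step: "c \<in> reachable mut c0 \<Longrightarrow> i \<in> c \<Longrightarrow> mut c i \<in> reachable mut c0"

definition skew :: "('o set \<Rightarrow> 'o \<Rightarrow> 'o \<Rightarrow> nat) \<Rightarrow> 'o set \<Rightarrow> 'o \<Rightarrow> 'o \<Rightarrow> int" where
  "skew arr c a b = int (arr c a b) - int (arr c b a)"

text \<open>Properties of the exchange graph of C(Gamma) stated in the context:
  clusters are finite, Q_c has no loops / 2-cycles (non-degeneracy), mutation replaces
  exactly one object by a new one and is involutive, mutation of clusters induces
  Fomin--Zelevinsky quiver mutation, commuting mutations give a 4-cycle, and one arrow
  j -> i gives the 5-cycle.\<close>
definition cluster_structure ::
  "('o set \<Rightarrow> 'o \<Rightarrow> 'o set) \<Rightarrow> ('o set \<Rightarrow> 'o \<Rightarrow> 'o \<Rightarrow> nat) \<Rightarrow> 'o set \<Rightarrow> bool" where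
  "cluster_structure mut arr c0 \<longleftrightarrow>
    (\<forall>c \<in> reachable mut c0.
       finite c
     \<and> (\<forall>a. arr c a a = 0)
     \<and> (\<forall>a b. arr c a b = 0 \<or> arr c b a = 0)
     \<and> (\<forall>a b. arr c a b \<noteq> 0 \<longrightarrow> a \<in> c \<and> b \<in> c)
     \<and> (\<forall>i \<in> c. \<exists>k. k \<notin> c \<and> mut c i = insert k (c - {i}) \<and> mut (mut c i) k = c
           \<and> (\<forall>a \<in> c - {i}. arr (mut c i) k a = arr c a i \<and> arr (mut c i) a k = arr c i a)
           \<and> (\<forall>a \<in> c - {i}. \<forall>b \<in> c - {i}.
                 skew arr (mut c i) a b = skew arr c a b
                   + int (arr c a i) * int (arr c i b) - int (arr c b i) * int (arr c i a)))
     \<and> (\<forall>i \<in> c. \<forall>j \<in> c. i \<noteq> j \<and> arr c i j = 0 \<and> arr c j i = 0 \<longrightarrow>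
            mut (mut c i) j = mut (mut c j) i)
     \<and> (\<forall>i \<in> c. \<forall>j \<in> c. i \<noteq> j \<and> arr c j i = 1 \<and> arr c i j = 0 \<longrightarrow>
            (\<exists>k \<in> mut (mut c i) j. mut (mut (mut c i) j) k = mut (mut c j) i)))"

text \<open>Forward mutation edges: Fwd c i is the oriented edge c -> mut c i;
  Inv c i is its formal inverse.\<close>
definition edge_to :: "('o set \<Rightarrow> 'o \<Rightarrow> 'o set) \<Rightarrow> 'o set \<Rightarrow> 'o set \<Rightarrow> 'o letter" where
  "edge_to mut x y = Fwd x (SOME k. k \<in> x \<and> mut x k = y)"

fun lsrc :: "('o set \<Rightarrow> 'o \<Rightarrow> 'o set) \<Rightarrow> 'o letter \<Rightarrow> 'o set" where
  "lsrc mut (Fwd c i) = c"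
| "lsrc mut (Inv c i) = mut c i"

fun ltgt :: "('o set \<Rightarrow> 'o \<Rightarrow> 'o set) \<Rightarrow> 'o letter \<Rightarrow> 'o set" where
  "ltgt mut (Fwd c i) = mut c i"
| "ltgt mut (Inv c i) = c"

fun lok :: "('o set \<Rightarrow> 'o \<Rightarrow> 'o set) \<Rightarrow> 'o set \<Rightarrow> 'o letter \<Rightarrow> bool" where
  "lok mut c0 (Fwd c i) = (c \<in> reachable mut c0 \<and> i \<in> c)"
| "lok mut c0 (Inv c i) = (c \<in> reachable mut c0 \<and> i \<in> c)"

fun linv :: "'o letter \<Rightarrow> 'o letter" where
  "linv (Fwd c i) = Inv c i"
| "linv (Inv c i) = Fwd c i"

text \<open>Paths in the path groupoid of CEG, composed left to right.\<close>
inductive vpath :: "('o set \<Rightarrow> 'o \<Rightarrow> 'o set) \<Rightarrow> 'o set \<Rightarrow> 'o set \<Rightarrow> 'o letter list \<Rightarrow> 'o set \<Rightarrow> bool"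
  for mut c0 where
  nil: "x \<in> reachable mut c0 \<Longrightarrow> vpath mut c0 x [] x"
| cons: "lok mut c0 a \<Longrightarrow> lsrc mut a = x \<Longrightarrow> vpath mut c0 (ltgt mut a) p y \<Longrightarrow> vpath mut c0 x (a # p) y"

text \<open>Defining relations of ceg: gen_rel x y p q means p = q imposed as morphisms x -> y.\<close>
inductive gen_rel :: "('o set \<Rightarrow> 'o \<Rightarrow> 'o set) \<Rightarrow> ('o set \<Rightarrow> 'o \<Rightarrow> 'o \<Rightarrow> nat) \<Rightarrow> 'o set \<Rightarrow>
    'o set \<Rightarrow> 'o set \<Rightarrow> 'o letter list \<Rightarrow> 'o letter list \<Rightarrow> bool"
  for mut arr c0 where
  hexagon: "c \<in> reachable mut c0 \<Longrightarrow> i \<in> c \<Longrightarrow> j \<in> c \<Longrightarrow> i \<noteq> j \<Longrightarrow> arr c i j = 0 \<Longrightarrow>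
    gen_rel mut arr c0 c (mut c j)
      [Fwd c j, Fwd (mut c j) i, edge_to mut (mut (mut c j) i) (mut c j)]
      [Fwd c i, edge_to mut (mut c i) c, Fwd c j]"
| square: "c \<in> reachable mut c0 \<Longrightarrow> i \<in> c \<Longrightarrow> j \<in> c \<Longrightarrow> i \<noteq> j \<Longrightarrow> arr c i j = 0 \<Longrightarrow>
    arr c j i = 0 \<Longrightarrow>
    gen_rel mut arr c0 c (mut (mut c j) i)
      [Fwd c j, Fwd (mut c j) i]
      [Fwd c i, Fwd (mut c i) j]"
| pentagon: "c \<in> reachable mut c0 \<Longrightarrow> i \<in> c \<Longrightarrow> j \<in> c \<Longrightarrow> i \<noteq> j \<Longrightarrow> arr c i j = 0 \<Longrightarrow>
    arr c j i = 1 \<Longrightarrow>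
    gen_rel mut arr c0 c (mut (mut c j) i)
      [Fwd c j, Fwd (mut c j) i]
      [Fwd c i, Fwd (mut c i) j, edge_to mut (mut (mut c i) j) (mut (mut c j) i)]"

inductive ceg_eq :: "('o set \<Rightarrow> 'o \<Rightarrow> 'o set) \<Rightarrow> ('o set \<Rightarrow> 'o \<Rightarrow> 'o \<Rightarrow> nat) \<Rightarrow> 'o set \<Rightarrow>
    'o set \<Rightarrow> 'o set \<Rightarrow> 'o letter list \<Rightarrow> 'o letter list \<Rightarrow> bool"
  for mut arr c0 where
  refl: "vpath mut c0 x p y \<Longrightarrow> ceg_eq mut arr c0 x y p p"
| sym: "ceg_eq mut arr c0 x y p q \<Longrightarrow> ceg_eq mut arr c0 x y q p"
| trans: "ceg_eq mut arr c0 x y p q \<Longrightarrow> ceg_eq mut arr c0 x y q r \<Longrightarrow> ceg_eq mut arr c0 x y p r"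
| cancel: "vpath mut c0 x [a] y \<Longrightarrow> ceg_eq mut arr c0 x x [a, linv a] []"
| gen: "gen_rel mut arr c0 x y p q \<Longrightarrow> vpath mut c0 x p y \<Longrightarrow> vpath mut c0 x q y \<Longrightarrow>
    ceg_eq mut arr c0 x y p q"
| ctx: "ceg_eq mut arr c0 u v p q \<Longrightarrow> vpath mut c0 x a u \<Longrightarrow> vpath mut c0 v b y \<Longrightarrow>
    ceg_eq mut arr c0 x y (a @ p @ b) (a @ q @ b)"

definition twist :: "('o set \<Rightarrow> 'o \<Rightarrow> 'o set) \<Rightarrow> 'o set \<Rightarrow> 'o \<Rightarrow> 'o letter list" where
  "twist mut c i = [Fwd c i, edge_to mut (mut c i) c]"

end

theory Submission
  imports Defs
begin

(* A hexagon relation says that the forward mutation c \<rightarrow> \<mu>\<^sub>j c conjugates the local twist at i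
   of c into the local twist at i of \<mu>\<^sub>j c, provided there is no arrow from i to j.  Without
   arrows between i and j, applying this at c and at \<mu>\<^sub>j c moves t\<^sub>i past both halves of the
   loop t\<^sub>j = (c \<rightarrow> \<mu>\<^sub>j c \<rightarrow> c).  With one arrow j \<rightarrow> i, the 5-cycle of clusters through
   \<mu>\<^sub>i c, c and \<mu>\<^sub>j c carries two pentagon and two hexagon relations, and rewriting
   t\<^sub>i t\<^sub>j t\<^sub>i with these four relations yields t\<^sub>j t\<^sub>i t\<^sub>j.  The axioms do not exclude that the
   5-cycle collapses to a triangle (\<mu>\<^sub>i \<mu>\<^sub>j c = \<mu>\<^sub>i c); then the two pentagon relations, after
   cancelling their common last edge, already give t\<^sub>i = t\<^sub>j. *)

lemma vpath_Nil_iff: "vpath mut c0 x [] y \<longleftrightarrow> x \<in> reachable mut c0 \<and> y = x"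
  by (auto intro: vpath.nil elim: vpath.cases)

lemma vpath_Cons_iff:
  "vpath mut c0 x (a # p) y \<longleftrightarrow> lok mut c0 a \<and> lsrc mut a = x \<and> vpath mut c0 (ltgt mut a) p y"
  by (auto intro: vpath.cons elim: vpath.cases)

lemma vpath_source_reachable: "vpath mut c0 x p y \<Longrightarrow> x \<in> reachable mut c0"
proof (induction rule: vpath.induct)
  case (cons a x p y)
  then show ?case by (cases a) (auto intro: reachable.step)
qed

lemma vpath_target_reachable: "vpath mut c0 x p y \<Longrightarrow> y \<in> reachable mut c0"
  by (induction rule: vpath.induct) auto

lemma vpath_append_iff:
  "vpath mut c0 x (p @ q) z \<longleftrightarrow> (\<exists>y. vpath mut c0 x p y \<and> vpath mut c0 y q z)"
  by (induction p arbitrary: x) (auto simp: vpath_Nil_iff vpath_Cons_iff vpath_source_reachable)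

lemma lok_ltgt_reachable: "lok mut c0 a \<Longrightarrow> ltgt mut a \<in> reachable mut c0"
  by (cases a) (auto intro: reachable.step)

lemma vpath_linv: "vpath mut c0 x [a] y \<Longrightarrow> vpath mut c0 y [linv a] x"
  by (cases a) (auto simp: vpath_Cons_iff vpath_Nil_iff intro: reachable.step)

lemma ceg_eq_vpath: "ceg_eq mut arr c0 x y p q \<Longrightarrow> vpath mut c0 x p y \<and> vpath mut c0 x q y"
proof (induction rule: ceg_eq.induct)
  case (cancel x a y)
  then have loop: "vpath mut c0 x ([a] @ [linv a]) x"
    using vpath_linv vpath_append_iff by blast
  then show ?case
    using vpath_source_reachable[OF loop] by (auto intro: vpath.nil)
qed (auto simp: vpath_append_iff)

lemma ceg_eq_append:
  assumes "ceg_eq mut arr c0 x y p q" and "ceg_eq mut arr c0 y z p' q'"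
  shows "ceg_eq mut arr c0 x z (p @ p') (q @ q')"
proof -
  have q: "vpath mut c0 x q y" and p': "vpath mut c0 y p' z"
    using assms ceg_eq_vpath by blast+
  have "ceg_eq mut arr c0 x z ([] @ p @ p') ([] @ q @ p')"
    using ceg_eq.ctx[OF assms(1) vpath.nil p'] vpath_source_reachable[OF q] .
  moreover have "ceg_eq mut arr c0 x z (q @ p' @ []) (q @ q' @ [])"
    using ceg_eq.ctx[OF assms(2) q vpath.nil] vpath_target_reachable[OF p'] .
  ultimately show ?thesis by (auto intro: ceg_eq.trans)
qed

lemma ceg_eq_cancel_right:
  assumes eq: "ceg_eq mut arr c0 x y (p @ [e]) (q @ [e])" and e: "vpath mut c0 z [e] y"
  shows "ceg_eq mut arr c0 x z p q"
proof -
  have source: "vpath mut c0 z' [e] y \<Longrightarrow> z' = z" for z'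
    using e by (simp add: vpath_Cons_iff)
  have p: "vpath mut c0 x p z" and q: "vpath mut c0 x q z"
    using ceg_eq_vpath[OF eq] source by (auto simp: vpath_append_iff)
  have inverse: "ceg_eq mut arr c0 z z [e, linv e] []"
    using e by (rule ceg_eq.cancel)
  have "ceg_eq mut arr c0 x z (p @ [e, linv e]) (q @ [e, linv e])"
    using ceg_eq_append[OF eq ceg_eq.refl[OF vpath_linv[OF e]]] by simp
  moreover have "ceg_eq mut arr c0 x z (p @ [e, linv e]) p"
    using ceg_eq_append[OF ceg_eq.refl[OF p] inverse] by simp
  moreover have "ceg_eq mut arr c0 x z (q @ [e, linv e]) q"
    using ceg_eq_append[OF ceg_eq.refl[OF q] inverse] by simp
  ultimately show ?thesis by (meson ceg_eq.sym ceg_eq.trans)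
qed

declare ceg_eq.trans [trans]

(* With t\<^sub>i = a a' and t\<^sub>j = b b' at x: hex1, hex2 are the hexagons at \<mu>\<^sub>i x and \<mu>\<^sub>j \<mu>\<^sub>i x,
   pent1, pent2 the pentagons at x and \<mu>\<^sub>j x. *)
lemma ceg_eq_braid_of_pentagon_hexagons:
  assumes hex1: "ceg_eq mut arr c0 x4 x [a', b, b'] [d, e, a']"
    and hex2: "ceg_eq mut arr c0 x3 x4 [e, a', a] [f, g, e]"
    and pent1: "ceg_eq mut arr c0 x x2 [b, h] [a, d, f]"
    and pent2: "ceg_eq mut arr c0 x1 x3 [h, g] [b', a, d]"
  shows "ceg_eq mut arr c0 x x [a, a', b, b', a, a'] [b, b', a, a', b, b']"
proof -
  have "vpath mut c0 x4 [a', b, b'] x" "vpath mut c0 x4 [d, e, a'] x"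
    "vpath mut c0 x3 [e, a', a] x4" "vpath mut c0 x3 [f, g, e] x4"
    "vpath mut c0 x [b, h] x2" "vpath mut c0 x [a, d, f] x2"
    "vpath mut c0 x1 [h, g] x3" "vpath mut c0 x1 [b', a, d] x3"
    using hex1 hex2 pent1 pent2 ceg_eq_vpath by blast+
  then have paths: "vpath mut c0 x [a] x4" "vpath mut c0 x [a, a'] x" "vpath mut c0 x [a, d] x3"
    "vpath mut c0 x4 [a'] x" "vpath mut c0 x2 [g, e, a'] x" "vpath mut c0 x [] x"
    "vpath mut c0 x [b] x1" "vpath mut c0 x3 [e, a'] x" "vpath mut c0 x [b, b', a] x4"
    by (auto simp: vpath_Cons_iff vpath_Nil_iff lok_ltgt_reachable)
  have "ceg_eq mut arr c0 x x [a, a', b, b', a, a'] [a, d, e, a', a, a']"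
    using ceg_eq.ctx[OF hex1 paths(1,2)] by simp
  also have "ceg_eq mut arr c0 x x \<dots> [a, d, f, g, e, a']"
    using ceg_eq.ctx[OF hex2 paths(3,4)] by simp
  also have "ceg_eq mut arr c0 x x \<dots> [b, h, g, e, a']"
    using ceg_eq.ctx[OF ceg_eq.sym[OF pent1] paths(6,5)] by simp
  also have "ceg_eq mut arr c0 x x \<dots> [b, b', a, d, e, a']"
    using ceg_eq.ctx[OF pent2 paths(7,8)] by simp
  also have "ceg_eq mut arr c0 x x \<dots> [b, b', a, a', b, b']"
    using ceg_eq.ctx[OF ceg_eq.sym[OF hex1] paths(9,6)] by simp
  finally show ?thesis .
qed

locale cluster_exchange =
  fixes mut :: "'o set \<Rightarrow> 'o \<Rightarrow> 'o set" and arr :: "'o set \<Rightarrow> 'o \<Rightarrow> 'o \<Rightarrow> nat" and c0 :: "'o set"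
  assumes cluster_structure: "cluster_structure mut arr c0"
begin

abbreviation clusters where "clusters \<equiv> reachable mut c0"
abbreviation path where "path \<equiv> vpath mut c0"
abbreviation ceq where "ceq \<equiv> ceg_eq mut arr c0"

lemma mutation_exchange:
  assumes "d \<in> clusters" and "a \<in> d"
  obtains k where "k \<notin> d" and "mut d a = insert k (d - {a})" and "mut (mut d a) k = d"
    and "\<And>b. b \<in> d - {a} \<Longrightarrow> arr (mut d a) k b = arr d b a \<and> arr (mut d a) b k = arr d a b"
  using cluster_structure assms unfolding cluster_structure_def by metis

lemma mut_mut_commute:
  assumes "d \<in> clusters" "i \<in> d" "j \<in> d" "i \<noteq> j" "arr d i j = 0" "arr d j i = 0"
  shows "mut (mut d i) j = mut (mut d j) i"
  using cluster_structure assms unfolding cluster_structure_def by metis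

lemma pentagon_object:
  assumes "d \<in> clusters" "i \<in> d" "j \<in> d" "i \<noteq> j" "arr d i j = 0" "arr d j i = 1"
  shows "\<exists>m \<in> mut (mut d i) j. mut (mut (mut d i) j) m = mut (mut d j) i"
  using cluster_structure assms unfolding cluster_structure_def by metis

lemma mut_not_mem: "d \<in> clusters \<Longrightarrow> a \<in> d \<Longrightarrow> a \<notin> mut d a"
  by (erule mutation_exchange) auto

lemma mut_inj:
  assumes "d \<in> clusters" "a \<in> d" "b \<in> d" "mut d a = mut d b"
  shows "a = b"
proof (rule ccontr)
  assume "a \<noteq> b"
  obtain k where "mut d b = insert k (d - {b})"
    using assms(1,3) by (rule mutation_exchange)
  then have "a \<in> mut d a"
    using assms(2,4) \<open>a \<noteq> b\<close> by simp
  then show False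
    using mut_not_mem assms(1,2) by blast
qed

definition new_obj :: "'o set \<Rightarrow> 'o \<Rightarrow> 'o" where
  "new_obj d a = (SOME k. k \<in> mut d a \<and> mut (mut d a) k = d)"

lemma new_obj_eqI:
  assumes "d \<in> clusters" "a \<in> d" "k \<in> mut d a" "mut (mut d a) k = d"
  shows "new_obj d a = k"
  unfolding new_obj_def
proof (rule some_equality)
  fix k' assume "k' \<in> mut d a \<and> mut (mut d a) k' = d"
  then show "k' = k"
    using mut_inj[of "mut d a" k' k] assms reachable.step by metis
qed (use assms in simp)

lemma
  assumes "d \<in> clusters" "a \<in> d"
  shows new_obj_not_mem: "new_obj d a \<notin> d"
    and mut_eq_insert_new_obj: "mut d a = insert (new_obj d a) (d - {a})"
    and mut_mut_new_obj [simp]: "mut (mut d a) (new_obj d a) = d"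
    and arr_new_obj_from: "b \<in> d - {a} \<Longrightarrow> arr (mut d a) (new_obj d a) b = arr d b a"
    and arr_new_obj_to: "b \<in> d - {a} \<Longrightarrow> arr (mut d a) b (new_obj d a) = arr d a b"
proof -
  obtain k where k: "k \<notin> d" "mut d a = insert k (d - {a})" "mut (mut d a) k = d"
    "\<And>b. b \<in> d - {a} \<Longrightarrow> arr (mut d a) k b = arr d b a \<and> arr (mut d a) b k = arr d a b"
    using mutation_exchange[OF assms] by metis
  then have "new_obj d a = k"
    using assms by (intro new_obj_eqI) auto
  with k show "new_obj d a \<notin> d" "mut d a = insert (new_obj d a) (d - {a})" "mut (mut d a) (new_obj d a) = d"
    "b \<in> d - {a} \<Longrightarrow> arr (mut d a) (new_obj d a) b = arr d b a"
    "b \<in> d - {a} \<Longrightarrow> arr (mut d a) b (new_obj d a) = arr d a b"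
    by auto
qed

lemma mem_mut_iff:
  "d \<in> clusters \<Longrightarrow> a \<in> d \<Longrightarrow> b \<in> mut d a \<longleftrightarrow> b = new_obj d a \<or> b \<in> d \<and> b \<noteq> a"
  by (subst mut_eq_insert_new_obj) auto

lemma edge_to_mut:
  assumes "d \<in> clusters" "a \<in> d"
  shows "edge_to mut d (mut d a) = Fwd d a"
  unfolding edge_to_def by (rule arg_cong[where f = "Fwd d"], rule some_equality) (use assms in \<open>auto dest: mut_inj\<close>)

lemma edge_to_new_obj: "edge_to mut (mut d a) d = Fwd (mut d a) (new_obj d a)"
  by (simp add: edge_to_def new_obj_def)

lemma twist_eq: "twist mut d a = [Fwd d a, Fwd (mut d a) (new_obj d a)]"
  by (simp add: twist_def edge_to_new_obj)

lemma ceg_eq_gen_rel: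
  assumes "gen_rel mut arr c0 x y p q"
  shows "ceq x y p q"
proof -
  note path_simps = vpath_Cons_iff vpath_Nil_iff mem_mut_iff reachable.step
  have "path x p y \<and> path x q y"
    using assms
  proof (induction rule: gen_rel.induct)
    case (hexagon c i j)
    then show ?case by (simp add: path_simps edge_to_new_obj)
  next
    case (square c i j)
    then have "mut (mut c i) j = mut (mut c j) i"
      by (intro mut_mut_commute)
    with square show ?case by (simp add: path_simps)
  next
    case (pentagon c i j)
    then obtain m where m: "m \<in> mut (mut c i) j" "mut (mut (mut c i) j) m = mut (mut c j) i"
      using pentagon_object by blast
    then have "edge_to mut (mut (mut c i) j) (mut (mut c j) i) = Fwd (mut (mut c i) j) m"
      using edge_to_mut[of "mut (mut c i) j" m] pentagon by (simp add: path_simps)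
    with pentagon m show ?case by (simp add: path_simps)
  qed
  with assms show ?thesis
    by (blast intro: ceg_eq.gen)
qed

lemma hexagon_twist:
  assumes "c \<in> clusters" "i \<in> c" "j \<in> c" "i \<noteq> j" "arr c i j = 0"
  shows "ceq c (mut c j) (Fwd c j # twist mut (mut c j) i) (twist mut c i @ [Fwd c j])"
  using ceg_eq_gen_rel[OF gen_rel.hexagon[where arr = arr, OF assms]] by (simp add: twist_def)

lemma pentagon_ceq:
  assumes "c \<in> clusters" "i \<in> c" "j \<in> c" "i \<noteq> j" "arr c i j = 0" "arr c j i = 1"
    and "m \<in> mut (mut c i) j" "mut (mut (mut c i) j) m = mut (mut c j) i"
  shows "ceq c (mut (mut c j) i) [Fwd c j, Fwd (mut c j) i]
           [Fwd c i, Fwd (mut c i) j, Fwd (mut (mut c i) j) m]"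
  using ceg_eq_gen_rel[OF gen_rel.pentagon[where arr = arr, OF assms(1-6)]] edge_to_mut[of "mut (mut c i) j" m] assms
  by (simp add: mem_mut_iff reachable.step)

lemma twist_commute:
  assumes c: "c \<in> clusters" and ij: "i \<in> c" "j \<in> c" "i \<noteq> j"
    and no_arrow: "arr c i j = 0" "arr c j i = 0"
  shows "ceq c c (twist mut c i @ twist mut c j) (twist mut c j @ twist mut c i)"
proof -
  define c' k where "c' = mut c j" and "k = new_obj c j"
  have c': "c' \<in> clusters" "i \<in> c'" "k \<in> c'" "i \<noteq> k" "mut c' k = c"
    using c ij new_obj_not_mem[OF c ij(2)] by (auto simp: c'_def k_def mem_mut_iff reachable.step)
  have "arr c' i k = 0"
    using arr_new_obj_to[OF c ij(2), of i] ij no_arrow by (simp add: c'_def k_def)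
  then have hex': "ceq c' c (Fwd c' k # twist mut c i) (twist mut c' i @ [Fwd c' k])"
    using hexagon_twist[OF c'(1-4)] c'(5) by simp
  have hex: "ceq c c' (Fwd c j # twist mut c' i) (twist mut c i @ [Fwd c j])"
    unfolding c'_def using hexagon_twist[OF c ij no_arrow(1)] .
  have tj: "twist mut c j = [Fwd c j, Fwd c' k]"
    by (simp add: twist_eq c'_def k_def)
  have step_j: "path c [Fwd c j] c'" and step_k: "path c' [Fwd c' k] c"
    using c c' ij by (simp_all add: vpath_Cons_iff vpath_Nil_iff c'_def)
  have "ceq c c (twist mut c i @ twist mut c j) (Fwd c j # twist mut c' i @ [Fwd c' k])"
    using ceg_eq_append[OF ceg_eq.sym[OF hex] ceg_eq.refl[OF step_k]] by (simp add: tj)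
  also have "ceq c c \<dots> (twist mut c j @ twist mut c i)"
    using ceg_eq.sym[OF ceg_eq_append[OF ceg_eq.refl[OF step_j] hex']] by (simp add: tj)
  finally show ?thesis .
qed

lemma mut_mut_eq_insert:
  assumes "d \<in> clusters" "a \<in> d" "b \<in> d" "a \<noteq> b"
  shows "mut (mut d a) b = insert (new_obj (mut d a) b) (insert (new_obj d a) (d - {a, b}))"
proof -
  have "b \<in> mut d a"
    using assms by (simp add: mem_mut_iff)
  then have "mut (mut d a) b = insert (new_obj (mut d a) b) (mut d a - {b})"
    by (rule mut_eq_insert_new_obj[OF reachable.step[OF assms(1,2)]])
  also have "mut d a - {b} = insert (new_obj d a) (d - {a, b})"
    using mut_eq_insert_new_obj[OF assms(1,2)] new_obj_not_mem[OF assms(1,2)] assms(3) by auto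
  finally show ?thesis .
qed

lemma pentagon_closes_or_collapses:
  assumes c: "c \<in> clusters" and ij: "i \<in> c" "j \<in> c" "i \<noteq> j"
    and arrows: "arr c i j = 0" "arr c j i = 1"
  shows "mut (mut (mut c i) j) (new_obj c i) = mut (mut c j) i \<or> mut (mut c j) i = mut c i"
proof -
  have ci: "mut c i \<in> clusters" "j \<in> mut c i"
    using c ij by (simp_all add: reachable.step mem_mut_iff)
  obtain m where m: "m \<in> mut (mut c i) j" "mut (mut (mut c i) j) m = mut (mut c j) i"
    using pentagon_object[OF c ij arrows] by blast
  have "m \<notin> mut (mut c j) i"
    using mut_not_mem[OF reachable.step[OF ci] m(1)] m(2) by simp
  then have "m = new_obj (mut c i) j \<or> m = new_obj c i"
    using m(1) mut_mut_eq_insert[OF c ij] mut_mut_eq_insert[OF c ij(2,1) ij(3)[symmetric]] by auto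
  then show ?thesis
    using m(2) mut_mut_new_obj[OF ci] by auto
qed

lemma pentagon_closing_edge:
  assumes c: "c \<in> clusters" and ij: "i \<in> c" "j \<in> c" "i \<noteq> j"
    and closes: "mut (mut (mut c i) j) (new_obj c i) = mut (mut c j) i"
  shows "mut (mut (mut c j) i) (new_obj c j) = mut (mut c i) j"
proof -
  define c1 c2 c3 where "c1 = mut c j" and "c2 = mut (mut c j) i" and "c3 = mut (mut c i) j"
  define k k2 k3 k4 where "k = new_obj c j" and "k2 = new_obj c1 i"
    and "k3 = new_obj (mut c i) j" and "k4 = new_obj c i"
  define S n where "S = c - {i, j}" and "n = new_obj c3 k4"
  have R: "c1 \<in> clusters" "c3 \<in> clusters" "i \<in> c1" "j \<in> mut c i"
    using c ij by (simp_all add: c1_def c3_def reachable.step mem_mut_iff)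
  have sets: "c2 = insert k2 (insert k S)" "c3 = insert k3 (insert k4 S)"
    using mut_mut_eq_insert[OF c ij(2,1) ij(3)[symmetric]] mut_mut_eq_insert[OF c ij]
    by (auto simp: c1_def c2_def c3_def k_def k2_def k3_def k4_def S_def)
  have fresh: "k \<notin> c" "k4 \<notin> c" "k2 \<notin> c1" "k3 \<notin> mut c i" "k \<in> c1" "k4 \<in> mut c i"
    using new_obj_not_mem[OF c ij(1)] new_obj_not_mem[OF c ij(2)] new_obj_not_mem[OF R(1,3)]
      new_obj_not_mem[OF reachable.step[OF c ij(1)] R(4)] mem_mut_iff[OF c ij(1)] mem_mut_iff[OF c ij(2)]
    by (auto simp: c1_def k_def k2_def k3_def k4_def)
  have k4: "k4 \<in> c3" and closes': "mut c3 k4 = c2"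
    using sets(2) closes by (simp_all add: c2_def c3_def k4_def)
  have n: "c2 = insert n (c3 - {k4})" "n \<notin> c3" "mut c2 n = c3"
    using mut_eq_insert_new_obj[OF R(2) k4] new_obj_not_mem[OF R(2) k4] mut_mut_new_obj[OF R(2) k4]
    unfolding closes' n_def by simp_all
  have "c3 - {k4} = insert k3 S"
    using sets(2) fresh(2,4,6) by (auto simp: S_def)
  then have "insert k2 (insert k S) = insert n (insert k3 S)"
    using sets(1) n(1) by simp
  then have "n \<in> insert k2 (insert k S)" "k \<in> insert n (insert k3 S)"
    by (metis insertI1, metis insertI1 insertI2)
  moreover have "k \<notin> S" "k2 \<noteq> k" "n \<notin> S"
    using fresh n(2) sets(2) by (auto simp: S_def)
  ultimately have "n = k \<or> n = k2 \<and> k3 = k"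
    by blast
  moreover have "k3 \<noteq> k" if "n = k2"
  proof -
    have "c3 = c1"
      using that n(3) R(1,3) by (simp add: c1_def c2_def k2_def)
    then show ?thesis
      using R(3) sets(2) fresh(1,2) ij by (auto simp: S_def)
  qed
  ultimately show ?thesis
    using n(3) by (auto simp: c1_def c2_def c3_def k_def)
qed

lemma twist_braid_of_closed_pentagon:
  assumes c: "c \<in> clusters" and ij: "i \<in> c" "j \<in> c" "i \<noteq> j"
    and arrows: "arr c i j = 0" "arr c j i = 1"
    and closes: "mut (mut (mut c i) j) (new_obj c i) = mut (mut c j) i"
  shows "ceq c c (twist mut c i @ twist mut c j @ twist mut c i)
                 (twist mut c j @ twist mut c i @ twist mut c j)"
proof -
  define c1 c4 k k4 where "c1 = mut c j" and "c4 = mut c i" and "k = new_obj c j" and "k4 = new_obj c i"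
  define c2 c3 k3 where "c2 = mut c1 i" and "c3 = mut c4 j" and "k3 = new_obj c4 j"
  note defs = c1_def c2_def c3_def c4_def k_def k3_def k4_def
  have R: "c1 \<in> clusters" "c4 \<in> clusters" "c3 \<in> clusters" "c2 \<in> clusters"
    using c ij by (auto simp: defs mem_mut_iff reachable.step)
  have ij': "i \<in> c1" "j \<in> c4"
    using c ij by (simp_all add: defs mem_mut_iff)
  have mem: "k \<in> c1" "k \<noteq> i" "k4 \<in> c4" "k4 \<noteq> j" "k3 \<in> c3" "k4 \<in> c3" "k3 \<noteq> k4" "k \<in> c2"
    using c ij R ij' new_obj_not_mem[OF c ij(1)] new_obj_not_mem[OF c ij(2)]
      new_obj_not_mem[OF R(2) ij'(2)]
    by (auto simp: defs mem_mut_iff)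
  have muts: "mut c1 k = c" "mut c4 k4 = c" "mut c3 k3 = c4" "mut c3 k4 = c2" "mut c2 k = c3"
    using c ij R ij' closes pentagon_closing_edge[OF c ij closes] by (simp_all add: defs)
  have twists: "twist mut c i = [Fwd c i, Fwd c4 k4]" "twist mut c j = [Fwd c j, Fwd c1 k]"
      "twist mut c4 j = [Fwd c4 j, Fwd c3 k3]" "twist mut c4 k4 = [Fwd c4 k4, Fwd c i]"
      "twist mut c3 k4 = [Fwd c3 k4, Fwd c2 k]"
    using c ij R mem muts
    by (auto simp: twist_eq defs intro!: new_obj_eqI)
  have arrows': "arr c4 j k4 = 0" "arr c3 k4 k3 = 0" "arr c1 k i = 0" "arr c1 i k = 1"
    using c ij R ij' mem arrows arr_new_obj_to[OF c ij(1), of j] arr_new_obj_to[OF R(2) ij'(2), of k4]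
      arr_new_obj_from[OF c ij(2), of i] arr_new_obj_to[OF c ij(2), of i]
    by (simp_all add: defs)
  have hex1: "ceq c4 c [Fwd c4 k4, Fwd c j, Fwd c1 k] [Fwd c4 j, Fwd c3 k3, Fwd c4 k4]"
    using hexagon_twist[OF R(2) ij'(2) mem(3) mem(4)[symmetric] arrows'(1)] muts twists by (simp add: defs)
  have hex2: "ceq c3 c4 [Fwd c3 k3, Fwd c4 k4, Fwd c i] [Fwd c3 k4, Fwd c2 k, Fwd c3 k3]"
    using hexagon_twist[OF R(3) mem(6) mem(5) mem(7)[symmetric] arrows'(2)] muts twists by simp
  have pent1: "ceq c c2 [Fwd c j, Fwd c1 i] [Fwd c i, Fwd c4 j, Fwd c3 k4]"
    using pentagon_ceq[OF c ij arrows, of k4] mem muts by (simp add: defs)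
  have pent2: "ceq c1 c3 [Fwd c1 i, Fwd c2 k] [Fwd c1 k, Fwd c i, Fwd c4 j]"
    using pentagon_ceq[OF R(1) mem(1) ij'(1) mem(2) arrows'(3,4), of j] ij' muts by (simp add: defs)
  show ?thesis
    using ceg_eq_braid_of_pentagon_hexagons[OF hex1 hex2 pent1 pent2] by (simp add: twists)
qed

lemma collapsed_pentagon:
  assumes c: "c \<in> clusters" and ij: "i \<in> c" "j \<in> c" "i \<noteq> j"
    and collapsed: "mut (mut c j) i = mut c i"
  shows "new_obj c i = new_obj c j" and "mut (mut c i) j = mut c j"
proof -
  have c1: "mut c j \<in> clusters" "i \<in> mut c j" "j \<notin> mut c j"
    using c ij mut_not_mem[OF c ij(2)] by (simp_all add: reachable.step mem_mut_iff)
  have "new_obj c j \<in> mut (mut c j) i"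
    using mem_mut_iff[OF c1(1,2)] mem_mut_iff[OF c ij(2)] new_obj_not_mem[OF c ij(2)] ij(1) by auto
  then show "new_obj c i = new_obj c j"
    using collapsed mem_mut_iff[OF c ij(1)] new_obj_not_mem[OF c ij(2)] by auto
  have "j \<in> mut (mut c j) i"
    using collapsed mem_mut_iff[OF c ij(1)] ij by simp
  then have "new_obj (mut c j) i = j"
    using mem_mut_iff[OF c1(1,2)] c1(3) by auto
  then show "mut (mut c i) j = mut c j"
    using mut_mut_new_obj[OF c1(1,2)] collapsed by simp
qed

lemma twist_ceq_of_collapsed_pentagon:
  assumes c: "c \<in> clusters" and ij: "i \<in> c" "j \<in> c" "i \<noteq> j"
    and arrows: "arr c i j = 0" "arr c j i = 1"
    and collapsed: "mut (mut c j) i = mut c i"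
  shows "ceq c c (twist mut c i) (twist mut c j)"
proof -
  define c1 c4 k where "c1 = mut c j" and "c4 = mut c i" and "k = new_obj c j"
  note k4 = collapsed_pentagon(1)[OF c ij collapsed, folded k_def]
  have R: "c1 \<in> clusters" "c4 \<in> clusters" and ij': "i \<in> c1" "j \<in> c4"
    using c ij by (simp_all add: c1_def c4_def mem_mut_iff reachable.step)
  have k: "k \<in> c1" "k \<in> c4" "k \<notin> c"
    using c ij new_obj_not_mem[OF c ij(2)] k4[symmetric] by (simp_all add: c1_def c4_def k_def mem_mut_iff)
  have muts: "mut c1 i = c4" "mut c4 j = c1" "mut c4 k = c" "mut c1 k = c"
    using collapsed collapsed_pentagon(2)[OF c ij collapsed] mut_mut_new_obj[OF c ij(1), unfolded k4]
      mut_mut_new_obj[OF c ij(2)]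
    unfolding c1_def c4_def k_def by simp_all
  have twists: "twist mut c i = [Fwd c i, Fwd c4 k]" "twist mut c j = [Fwd c j, Fwd c1 k]"
    by (simp_all add: twist_eq c1_def c4_def k_def k4)
  have arrows': "arr c4 j k = 0" "arr c4 k j = 1"
    using arr_new_obj_to[OF c ij(1), of j] arr_new_obj_from[OF c ij(1), of j] ij arrows k4
    by (simp_all add: c4_def)
  have "ceq c c4 ([Fwd c j] @ [Fwd c1 i]) ([Fwd c i, Fwd c4 j] @ [Fwd c1 i])"
    using pentagon_ceq[OF c ij arrows, of i] ij' muts by (simp add: c1_def c4_def)
  then have pent1: "ceq c c1 [Fwd c j] [Fwd c i, Fwd c4 j]"
    by (rule ceg_eq_cancel_right) (use R ij' muts in \<open>simp add: vpath_Cons_iff vpath_Nil_iff\<close>)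
  have "j \<noteq> k"
    using ij(2) k(3) by blast
  then have "ceq c4 c1 ([Fwd c4 k] @ [Fwd c j]) ([Fwd c4 j, Fwd c1 k] @ [Fwd c j])"
    using pentagon_ceq[OF R(2) ij'(2) k(2) _ arrows', of j] ij muts c1_def[symmetric] by simp
  then have pent2: "ceq c4 c [Fwd c4 k] [Fwd c4 j, Fwd c1 k]"
    by (rule ceg_eq_cancel_right) (use c R ij muts c1_def[symmetric] in \<open>simp add: vpath_Cons_iff vpath_Nil_iff\<close>)
  have step_i: "path c [Fwd c i] c4" and step_k: "path c1 [Fwd c1 k] c"
    using c ij R k muts by (simp_all add: vpath_Cons_iff vpath_Nil_iff c4_def)
  have "ceq c c (twist mut c i) ([Fwd c i] @ [Fwd c4 j, Fwd c1 k])"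
    using ceg_eq_append[OF ceg_eq.refl[OF step_i] pent2] by (simp add: twists)
  also have "ceq c c \<dots> (twist mut c j)"
    using ceg_eq_append[OF ceg_eq.sym[OF pent1] ceg_eq.refl[OF step_k]] by (simp add: twists)
  finally show ?thesis .
qed

lemma twist_braid:
  assumes "c \<in> clusters" "i \<in> c" "j \<in> c" "i \<noteq> j" "arr c i j = 0" "arr c j i = 1"
  shows "ceq c c (twist mut c i @ twist mut c j @ twist mut c i)
                 (twist mut c j @ twist mut c i @ twist mut c j)"
  using pentagon_closes_or_collapses[OF assms]
proof
  assume "mut (mut c j) i = mut c i"
  then have "ceq c c (twist mut c i) (twist mut c j)"
    using twist_ceq_of_collapsed_pentagon assms by blast
  then show ?thesis
    by (metis ceg_eq_append ceg_eq.sym)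
qed (use twist_braid_of_closed_pentagon assms in blast)

end

theorem mainTheorem1:
  fixes mut :: "'o set \<Rightarrow> 'o \<Rightarrow> 'o set"
    and arr :: "'o set \<Rightarrow> 'o \<Rightarrow> 'o \<Rightarrow> nat"
    and c0 c :: "'o set" and i j :: 'o
  assumes "cluster_structure mut arr c0"
    and "c \<in> reachable mut c0"
    and "i \<in> c" and "j \<in> c" and "i \<noteq> j"
  shows "(arr c i j = 0 \<and> arr c j i = 0 \<longrightarrow>
            ceg_eq mut arr c0 c c (twist mut c i @ twist mut c j) (twist mut c j @ twist mut c i))
       \<and> (arr c i j + arr c j i = 1 \<longrightarrow>
            ceg_eq mut arr c0 c c (twist mut c i @ twist mut c j @ twist mut c i)
                                  (twist mut c j @ twist mut c i @ twist mut c j))"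
proof -
  interpret cluster_exchange mut arr c0
    using assms(1) by unfold_locales
  show ?thesis
  proof (intro conjI impI)
    assume "arr c i j = 0 \<and> arr c j i = 0"
    then show "ceq c c (twist mut c i @ twist mut c j) (twist mut c j @ twist mut c i)"
      using twist_commute[OF assms(2-5)] by blast
  next
    assume one_arrow: "arr c i j + arr c j i = 1"
    show "ceq c c (twist mut c i @ twist mut c j @ twist mut c i)
                  (twist mut c j @ twist mut c i @ twist mut c j)"
    proof (cases "arr c i j = 0")
      case True
      with one_arrow have "arr c j i = 1"
        by simp
      with True show ?thesis
        by (rule twist_braid[OF assms(2-5)])
    next
      case False
      with one_arrow have "arr c j i = 0" "arr c i j = 1"
        by simp_all
      then show ?thesis
        by (rule ceg_eq.sym[OF twist_braid[OF assms(2,4,3) assms(5)[symmetric]]])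
    qed
  qed
qed

end
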